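(* Let $G$ be a finite, connected, simple, bridgeless, triangle-free cubic graph, let $\Lambda$ be a valid labeling of $\mathfrak{L}_2(G)$ and let $\mathbb{X}\in\mathcal{X}$. Then: (a) if $\mathbb{X}$ contains an open edge of $\gamma_1$ and an open edge of $\gamma_2$ for two distinct cycles $\gamma_1,\gamma_2\in\Gamma_\Lambda$, then $\mathbb{X}$ is a Type B self-intersection with respect to $\mathcal{F}_{\mathbb{X}}(\Lambda)$; (b) if $\mathbb{X}$ is a Type B self-intersection with respect to $\Lambda$, then with respect to $\mathcal{F}_{\mathbb{X}}(\Lambda)$ the two open edges of $\mathbb{X}$ belong to two distinct (hence adjacent) cycles of $\Gamma_{\mathcal{F}_{\mathbb{X}}(\Lambda)}$; (c) if $\mathbb{X}$ is a Type A self-intersection with respect to $\Lambda$, then $\mathbb{X}$ is a Type A self-intersection with respect to $\mathcal{F}_{\mathbb{X}}(\Lambda)$.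
   Context: $\mathcal{L}(H)$ is the line graph of $H$. Let $\mathcal{T}$ be the set of triangles of $\mathcal{L}(\mathcal{L}(G))$ formed by the three edges of a triangle of $\mathcal{L}(G)$. $\mathfrak{L}_2(G)$ has the vertex set of $\mathcal{L}(\mathcal{L}(G))$ and the edges of $\mathcal{L}(\mathcal{L}(G))$ not in any triangle of $\mathcal{T}$. For each edge $e$ of $G$, the reduced clique $\mathbb{X}_e$ is the subgraph of $\mathfrak{L}_2(G)$ on the four edges of $\mathcal{L}(G)$ incident to $e$, with all edges of $\mathfrak{L}_2(G)$ among them; it is a 4-cycle. $\mathcal{X}$ is the set of reduced cliques. A labeling $\Lambda$ gives each edge of $\mathfrak{L}_2(G)$ a label in $\{0,1\}$ ($1$ = open, $0$ = closed); it is valid if in every reduced clique each vertex is incident to two edges of that clique with different labels (so the open edges of each $\mathbb{X}$ form a perfect matching of the 4-cycle $\mathbb{X}$). $\Gamma_\Lambda$ is the set of connected components (cycles) of the subgraph formed by open edges. The label inversion $\mathcal{F}_{\mathbb{X}}(\Lambda)$ is the valid labeling obtained from $\Lambda$ by replacing $\lambda_f$ by $1-\lambda_f$ for every edge $f$ of $\mathbb{X}$ and leaving all other labels unchanged. $\mathbb{X}$ is a self-intersection of $\gamma\in\Gamma_\Lambda$ if both open edges of $\mathbb{X}$ lie on $\gamma$. Write $\mathbb{X}$ as the 4-cycle $(x_1,x_2,x_3,x_4)$ with open edges $x_1x_2$ and $x_3x_4$; deleting these two edges from $\gamma$ leaves two vertex-disjoint paths with endpoint set $\{x_1,x_2,x_3,x_4\}$.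 The self-intersection is of Type B if these paths connect $x_2$ with $x_3$ and $x_4$ with $x_1$, and of Type A if they connect $x_1$ with $x_3$ and $x_2$ with $x_4$. *)

theory Defs
  imports Main
begin

definition simple_graph :: "'v set \<Rightarrow> 'v set set \<Rightarrow> bool" where
  "simple_graph V E \<longleftrightarrow> finite V \<and> (\<forall>e\<in>E. \<exists>u v. u \<noteq> v \<and> u \<in> V \<and> v \<in> V \<and> e = {u, v})"

definition adj_rel :: "'a set set \<Rightarrow> ('a \<times> 'a) set" where
  "adj_rel F = {(x, y). x \<noteq> y \<and> {x, y} \<in> F}"

definition reach :: "'a set set \<Rightarrow> 'a \<Rightarrow> 'a \<Rightarrow> bool" where
  "reach F u v \<longleftrightarrow> (u, v) \<in> (adj_rel F)\<^sup>*"

definition connected_graph :: "'v set \<Rightarrow> 'v set set \<Rightarrow> bool" where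
  "connected_graph V E \<longleftrightarrow> (\<forall>u\<in>V. \<forall>v\<in>V. reach E u v)"

definition bridgeless :: "'v set \<Rightarrow> 'v set set \<Rightarrow> bool" where
  "bridgeless V E \<longleftrightarrow> (\<forall>e\<in>E. \<forall>u v. e = {u, v} \<longrightarrow> reach (E - {e}) u v)"

definition triangle_free :: "'v set \<Rightarrow> 'v set set \<Rightarrow> bool" where
  "triangle_free V E \<longleftrightarrow> \<not> (\<exists>a b c. {a, b} \<in> E \<and> {b, c} \<in> E \<and> {a, c} \<in> E)"

definition cubic :: "'v set \<Rightarrow> 'v set set \<Rightarrow> bool" where
  "cubic V E \<longleftrightarrow> (\<forall>v\<in>V. card {e\<in>E. v \<in> e} = 3)"

text \<open>Edge set of the line graph of a graph with edge set E (its vertex set is E).\<close>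
definition LE :: "'a set set \<Rightarrow> 'a set set set" where
  "LE E = {{e, f} | e f. e \<in> E \<and> f \<in> E \<and> e \<noteq> f \<and> e \<inter> f \<noteq> {}}"

text \<open>Edges of the reduced line graph \<open>\<frak>L\<^sub>2(G)\<close>: edges of L(L(G)) not lying in any triangle
  of L(L(G)) formed by the three edges of a triangle {e1,e2,e3} of L(G).
  Its vertex set is LE E (the edges of L(G)).\<close>
definition L2_edges :: "'v set set \<Rightarrow> 'v set set set set" where
  "L2_edges E = {ab \<in> LE (LE E).
     \<not> (\<exists>e1 e2 e3. {e1, e2} \<in> LE E \<and> {e2, e3} \<in> LE E \<and> {e1, e3} \<in> LE E \<and>
          ab \<subseteq> {{e1, e2}, {e2, e3}, {e1, e3}})}"

definition Xv :: "'v set set \<Rightarrow> 'v set \<Rightarrow> 'v set set set" where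
  "Xv E e = {a \<in> LE E. e \<in> a}"

definition Xe :: "'v set set \<Rightarrow> 'v set \<Rightarrow> 'v set set set set" where
  "Xe E e = {f \<in> L2_edges E. f \<subseteq> Xv E e}"

definition cyc4 :: "'v set set \<Rightarrow> 'v set \<Rightarrow> 'v set set \<Rightarrow> 'v set set \<Rightarrow> 'v set set \<Rightarrow> 'v set set \<Rightarrow> bool" where
  "cyc4 E e x1 x2 x3 x4 \<longleftrightarrow> distinct [x1, x2, x3, x4] \<and> Xv E e = {x1, x2, x3, x4} \<and>
     Xe E e = {{x1, x2}, {x2, x3}, {x3, x4}, {x4, x1}}"

type_synonym 'v labeling = "'v set set set \<Rightarrow> nat"

definition valid_labeling :: "'v set set \<Rightarrow> 'v labeling \<Rightarrow> bool" where
  "valid_labeling E lam \<longleftrightarrow> (\<forall>f\<in>L2_edges E. lam f \<in> {0, 1}) \<and>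
     (\<forall>e\<in>E. \<forall>x\<in>Xv E e. \<exists>f1\<in>Xe E e. \<exists>f2\<in>Xe E e. x \<in> f1 \<and> x \<in> f2 \<and> lam f1 \<noteq> lam f2)"

definition open_edges :: "'v set set \<Rightarrow> 'v labeling \<Rightarrow> 'v set set set set" where
  "open_edges E lam = {f \<in> L2_edges E. lam f = 1}"

text \<open>\<open>\<Gamma>_\<Lambda>\<close>: connected components (as vertex sets) of the subgraph formed by the open edges.\<close>
definition Gamma :: "'v set set \<Rightarrow> 'v labeling \<Rightarrow> 'v set set set set" where
  "Gamma E lam = {{y \<in> \<Union>(open_edges E lam). reach (open_edges E lam) x y} | x. x \<in> \<Union>(open_edges E lam)}"

definition flip :: "'v set set \<Rightarrow> 'v set \<Rightarrow> 'v labeling \<Rightarrow> 'v labeling" where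
  "flip E e lam = (\<lambda>f. if f \<in> Xe E e then 1 - lam f else lam f)"

definition self_intersection :: "'v set set \<Rightarrow> 'v labeling \<Rightarrow> 'v set \<Rightarrow> 'v set set set \<Rightarrow> bool" where
  "self_intersection E lam e \<gamma> \<longleftrightarrow> \<gamma> \<in> Gamma E lam \<and>
     (\<forall>f\<in>Xe E e. lam f = 1 \<longrightarrow> f \<subseteq> \<gamma>)"

definition cyc_edges :: "'v set set \<Rightarrow> 'v labeling \<Rightarrow> 'v set set set \<Rightarrow> 'v set set set set" where
  "cyc_edges E lam \<gamma> = {f \<in> open_edges E lam. f \<subseteq> \<gamma>}"

definition typeB :: "'v set set \<Rightarrow> 'v labeling \<Rightarrow> 'v set \<Rightarrow> bool" where
  "typeB E lam e \<longleftrightarrow> (\<exists>\<gamma>. self_intersection E lam e \<gamma> \<and>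
     (\<exists>x1 x2 x3 x4. cyc4 E e x1 x2 x3 x4 \<and> lam {x1, x2} = 1 \<and> lam {x3, x4} = 1 \<and>
        reach (cyc_edges E lam \<gamma> - {{x1, x2}, {x3, x4}}) x2 x3 \<and>
        reach (cyc_edges E lam \<gamma> - {{x1, x2}, {x3, x4}}) x4 x1))"

definition typeA :: "'v set set \<Rightarrow> 'v labeling \<Rightarrow> 'v set \<Rightarrow> bool" where
  "typeA E lam e \<longleftrightarrow> (\<exists>\<gamma>. self_intersection E lam e \<gamma> \<and>
     (\<exists>x1 x2 x3 x4. cyc4 E e x1 x2 x3 x4 \<and> lam {x1, x2} = 1 \<and> lam {x3, x4} = 1 \<and>
        reach (cyc_edges E lam \<gamma> - {{x1, x2}, {x3, x4}}) x1 x3 \<and>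
        reach (cyc_edges E lam \<gamma> - {{x1, x2}, {x3, x4}}) x2 x4))"

end

(* Write X_e as the 4-cycle x1 x2 x3 x4 with open edges x1x2 and x3x4, and let R be the set of open
   edges outside X_e. A vertex {g, h} of L(G) lies in exactly the two reduced cliques X_g and X_h and
   has one open edge in each, so in R the x_i have degree 1 and all other vertices degree 2. By the
   handshake lemma every component of R contains an even number of the x_i, and since a connected
   graph has at most one vertex more than edges, at most two of them. Flipping X_e replaces x1x2, x3x4
   by x2x3, x4x1, so each statement is read off from how R pairs up the x_i: x1 with x2 and x3 with x4
   in (a), x2 with x3 and x4 with x1 in (b), x1 with x3 and x2 with x4 in (c). *)

theory Submission
  imports Defs
begin

section \<open>Reachability and components\<close>

lemma sym_adj_rel: "sym (adj_rel F)"
  unfolding adj_rel_def by (rule symI) (auto simp: insert_commute)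

lemma reach_refl [simp]: "reach F x x"
  by (simp add: reach_def)

lemma reach_sym: "reach F x y \<Longrightarrow> reach F y x"
  unfolding reach_def by (rule symD[OF sym_rtrancl[OF sym_adj_rel]])

lemma reach_trans: "reach F x y \<Longrightarrow> reach F y z \<Longrightarrow> reach F x z"
  unfolding reach_def by (rule rtrancl_trans)

lemma reach_edge: "{p, q} \<in> F \<Longrightarrow> reach F p q"
  unfolding reach_def adj_rel_def by (cases "p = q") auto

lemma reach_cover:
  assumes "reach F x y" and "\<And>p q. {p, q} \<in> F \<Longrightarrow> reach G p q"
  shows "reach G x y"
proof -
  have "adj_rel F \<subseteq> (adj_rel G)\<^sup>*"
    using assms(2) by (auto simp: adj_rel_def reach_def)
  then show ?thesis
    using assms(1) rtrancl_subset_rtrancl unfolding reach_def by blast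
qed

lemma reach_mono: "reach F x y \<Longrightarrow> F \<subseteq> G \<Longrightarrow> reach G x y"
  by (erule reach_cover) (auto intro: reach_edge)

lemma reach_in_Union: "reach F x y \<Longrightarrow> y \<noteq> x \<Longrightarrow> y \<in> \<Union>F"
  unfolding reach_def by (erule rtranclE) (auto simp: adj_rel_def)

lemma reach_insert_edge:
  assumes "reach (insert {p, q} F) x y"
  shows "reach F x y \<or> (reach F x p \<and> reach F q y) \<or> (reach F x q \<and> reach F p y)"
  using assms unfolding reach_def[of "insert _ _"]
proof (induction rule: rtrancl_induct)
  case (step y z)
  then have "reach F y z \<or> (y = p \<and> z = q) \<or> (y = q \<and> z = p)"
    by (auto simp: adj_rel_def doubleton_eq_iff intro: reach_edge)
  then show ?case
  proof (elim disjE conjE)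
    assume "reach F y z"
    with step.IH show ?case
      by (blast intro: reach_trans)
  qed (use step.IH in auto)
qed simp

definition component :: "'a set set \<Rightarrow> 'a \<Rightarrow> 'a set" where
  "component F x = {y. reach F x y}"

lemma in_component_iff [simp]: "y \<in> component F x \<longleftrightarrow> reach F x y"
  by (simp add: component_def)

lemma component_eq: "reach F x y \<Longrightarrow> component F x = component F y"
  unfolding component_def by (auto intro: reach_trans reach_sym)

definition induced_edges :: "'a set set \<Rightarrow> 'a set \<Rightarrow> 'a set set" where
  "induced_edges F S = {f\<in>F. f \<subseteq> S}"

lemma reach_within_component:
  assumes "reach F x y" and "component F x \<subseteq> S"
  shows "reach (induced_edges F S) x y"
  using assms(1) unfolding reach_def induced_edges_def
proof (induction rule: rtrancl_induct)
  case (step y z)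
  with assms(2) have "y \<in> S" "z \<in> S"
    by (auto simp: reach_def)
  with step show ?case
    by (auto simp: adj_rel_def intro: rtrancl_into_rtrancl)
qed simp

definition doubletons :: "'a set set \<Rightarrow> bool" where
  "doubletons F \<longleftrightarrow> (\<forall>f\<in>F. \<exists>p q. p \<noteq> q \<and> f = {p, q})"

lemma doubletonsE:
  assumes "doubletons F" and "f \<in> F"
  obtains p q where "f = {p, q}" and "p \<noteq> q"
  using assms unfolding doubletons_def by blast

lemma doubletons_subset: "doubletons F \<Longrightarrow> G \<subseteq> F \<Longrightarrow> doubletons G"
  unfolding doubletons_def by blast

lemma finite_component:
  assumes "finite F" and "doubletons F"
  shows "finite (component F x)"
proof -
  have "component F x \<subseteq> insert x (\<Union>F)"
    using reach_in_Union by fastforce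
  moreover have "finite (\<Union>F)"
    using assms by (auto elim: doubletonsE)
  ultimately show ?thesis
    using finite_subset by blast
qed

lemma edge_within_component:
  assumes "doubletons F" and "f \<in> F" and "f \<inter> component F x \<noteq> {}"
  shows "f \<subseteq> component F x"
proof -
  obtain p q where f: "f = {p, q}"
    using assms(1,2) by (rule doubletonsE)
  with assms(2) have "reach F p q" "reach F q p"
    by (auto intro: reach_edge reach_sym)
  with f assms(3) show ?thesis
    by (auto intro: reach_trans)
qed

section \<open>Counting vertices and edges of a component\<close>

lemma component_insert_edge:
  assumes "p \<in> component F x"
  shows "component (insert {p, q} F) x = component F x \<union> component F q"
proof
  show "component (insert {p, q} F) x \<subseteq> component F x \<union> component F q"
  proof
    fix y
    assume "y \<in> component (insert {p, q} F) x"
    then have "reach F x y \<or> (reach F x p \<and> reach F q y) \<or> (reach F x q \<and> reach F p y)"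
      using reach_insert_edge by simp
    with assms show "y \<in> component F x \<union> component F q"
      using reach_trans[of F x p y] by auto
  qed
next
  let ?F = "insert {p, q} F"
  have mono: "reach ?F a b" if "reach F a b" for a b
    using that by (rule reach_mono) blast
  have "reach ?F x p"
    using assms by (simp add: mono)
  then have xq: "reach ?F x q"
    by (rule reach_trans) (simp add: reach_edge)
  show "component F x \<union> component F q \<subseteq> component ?F x"
  proof
    fix y
    assume "y \<in> component F x \<union> component F q"
    then show "y \<in> component ?F x"
      using mono reach_trans[OF xq mono] by auto
  qed
qed

lemma component_insert_edge_outside:
  assumes "p \<notin> component F x" and "q \<notin> component F x"
  shows "component (insert {p, q} F) x = component F x"
proof (intro equalityI subsetI)
  fix y
  assume "y \<in> component (insert {p, q} F) x"
  then show "y \<in> component F x"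
    using reach_insert_edge[of p q F x y] assms by auto
next
  fix y
  assume "y \<in> component F x"
  then show "y \<in> component (insert {p, q} F) x"
    using reach_mono[of F x y] by (simp add: subset_insertI)
qed

lemma component_disjoint: "\<not> reach F x y \<Longrightarrow> component F x \<inter> component F y = {}"
  using reach_trans[OF _ reach_sym] by fastforce

lemma induced_edges_disjoint:
  assumes "S \<inter> T = {}" and "doubletons F"
  shows "induced_edges F S \<inter> induced_edges F T = {}"
proof (intro equalityI subsetI)
  fix f
  assume "f \<in> induced_edges F S \<inter> induced_edges F T"
  then have "f \<in> F" and "f \<subseteq> {}"
    using assms(1) by (auto simp: induced_edges_def)
  with assms(2) show "f \<in> {}"
    by (auto elim: doubletonsE)
qed simp

lemma component_empty: "component {} x = {x}"
  using reach_in_Union[of "{}" x] by fastforce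

lemma card_component_insert_edge_le:
  assumes "finite F" and "doubletons F" and "{p, q} \<notin> F" and "p \<in> component F x"
    and IH: "\<And>y. card (component F y) \<le> Suc (card (induced_edges F (component F y)))"
  shows "card (component (insert {p, q} F) x)
           \<le> Suc (card (induced_edges (insert {p, q} F) (component (insert {p, q} F) x)))"
proof -
  let ?F = "insert {p, q} F" and ?C = "component F x" and ?D = "component F q"
  let ?edges = "induced_edges ?F (component ?F x)"
  have C: "component ?F x = ?C \<union> ?D"
    using assms(4) by (rule component_insert_edge)
  have card_le: "card A \<le> card ?edges" if "A \<subseteq> ?edges" for A
    using that assms(1) by (intro card_mono) (simp_all add: induced_edges_def)
  show ?thesis
  proof (cases "q \<in> ?C")
    case True
    then have "component ?F x = ?C"
      using C component_eq[of F x q] by simp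
    then have "card (induced_edges F ?C) \<le> card ?edges"
      by (intro card_le) (auto simp: induced_edges_def)
    with IH[of x] \<open>component ?F x = ?C\<close> show ?thesis
      by simp
  next
    case False
    then have disj: "?C \<inter> ?D = {}"
      by (simp add: component_disjoint)
    then have "induced_edges F ?C \<inter> induced_edges F ?D = {}"
      using assms(2) by (rule induced_edges_disjoint)
    then have "card (insert {p, q} (induced_edges F ?C \<union> induced_edges F ?D))
        = Suc (card (induced_edges F ?C) + card (induced_edges F ?D))"
      using assms(1,3) by (simp add: induced_edges_def card_Un_disjoint)
    moreover have "card (insert {p, q} (induced_edges F ?C \<union> induced_edges F ?D)) \<le> card ?edges"
      using C assms(4) by (intro card_le) (auto simp: induced_edges_def)
    moreover have "card (component ?F x) = card ?C + card ?D"
      using C disj finite_component[OF assms(1,2)] by (simp add: card_Un_disjoint)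
    ultimately show ?thesis
      using IH[of x] IH[of q] by linarith
  qed
qed

lemma card_component_le_Suc_card_edges:
  assumes "finite F" and "doubletons F"
  shows "card (component F x) \<le> Suc (card (induced_edges F (component F x)))"
  using assms
proof (induction F arbitrary: x rule: finite_induct)
  case empty
  then show ?case
    by (simp add: component_empty)
next
  case (insert f F)
  obtain p q where f: "f = {p, q}"
    using insert.prems by (auto elim: doubletonsE)
  have F: "doubletons F"
    using insert.prems doubletons_subset by blast
  then have IH: "\<And>y. card (component F y) \<le> Suc (card (induced_edges F (component F y)))"
    by (rule insert.IH)
  have new: "{p, q} \<notin> F" "{q, p} \<notin> F"
    using insert.hyps(2) f by (simp_all add: insert_commute)
  consider "p \<in> component F x" | "q \<in> component F x"
    | "p \<notin> component F x" "q \<notin> component F x"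
    by blast
  then show ?case
  proof cases
    case 1
    then show ?thesis
      using card_component_insert_edge_le[OF insert.hyps(1) F new(1) _ IH] f by simp
  next
    case 2
    then show ?thesis
      using card_component_insert_edge_le[OF insert.hyps(1) F new(2) _ IH] f
      by (simp add: insert_commute)
  next
    case 3
    then have "component (insert f F) x = component F x"
      unfolding f by (rule component_insert_edge_outside)
    moreover have "card (induced_edges F (component F x))
        \<le> card (induced_edges (insert f F) (component F x))"
      using insert.hyps(1) by (intro card_mono) (auto simp: induced_edges_def)
    ultimately show ?thesis
      using IH[of x] by simp
  qed
qed

lemma sum_degree_component:
  assumes "finite F" and "doubletons F"
  shows "(\<Sum>w\<in>component F x. card {f\<in>F. w \<in> f}) = 2 * card (induced_edges F (component F x))"
proof -
  let ?C = "component F x"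
  have "(\<Sum>w\<in>?C. card {f\<in>F. w \<in> f}) = (\<Sum>w\<in>?C. card {f\<in>induced_edges F ?C. w \<in> f})"
  proof (rule sum.cong)
    fix w
    assume w: "w \<in> ?C"
    have "f \<subseteq> ?C" if "f \<in> F" and "w \<in> f" for f
      using edge_within_component[OF assms(2) that(1)] w that(2) by blast
    then have "{f\<in>F. w \<in> f} = {f\<in>induced_edges F ?C. w \<in> f}"
      by (auto simp: induced_edges_def)
    then show "card {f\<in>F. w \<in> f} = card {f\<in>induced_edges F ?C. w \<in> f}"
      by simp
  qed simp
  also have "\<dots> = 2 * card (induced_edges F ?C)"
  proof (rule sum_multicount)
    show "finite ?C"
      using assms by (rule finite_component)
    show "finite (induced_edges F ?C)"
      using assms(1) by (simp add: induced_edges_def)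
    show "\<forall>f\<in>induced_edges F ?C. card {w\<in>?C. w \<in> f} = 2"
    proof
      fix f
      assume f: "f \<in> induced_edges F ?C"
      then have "{w\<in>?C. w \<in> f} = f"
        by (auto simp: induced_edges_def)
      moreover obtain p q where "f = {p, q}" and "p \<noteq> q"
        using assms(2) f by (auto simp: induced_edges_def elim: doubletonsE)
      ultimately show "card {w\<in>?C. w \<in> f} = 2"
        by simp
    qed
  qed
  finally show ?thesis .
qed

text \<open>The vertices of degree one come in pairs by the handshake lemma, and the edge bound
  leaves room for at most one pair.\<close>

lemma card_component_Int_degree_one:
  assumes "finite F" and "doubletons F"
    and deg: "\<And>w. w \<in> component F x \<Longrightarrow> card {f\<in>F. w \<in> f} = (if w \<in> T then 1 else 2)"
  shows "card (component F x \<inter> T) \<in> {0, 2}"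
proof -
  let ?C = "component F x"
  have finC: "finite ?C"
    using assms(1,2) by (rule finite_component)
  have "(\<Sum>w\<in>?C. card {f\<in>F. w \<in> f}) + card (?C \<inter> T)
      = (\<Sum>w\<in>?C. card {f\<in>F. w \<in> f} + (if w \<in> T then 1 else 0))"
    using finC by (simp add: sum.distrib sum.If_cases Int_def)
  also have "\<dots> = (\<Sum>w\<in>?C. 2)"
    by (rule sum.cong) (simp_all add: deg)
  also have "\<dots> = 2 * card ?C"
    by simp
  finally have "2 * card (induced_edges F ?C) + card (?C \<inter> T) = 2 * card ?C"
    by (simp add: sum_degree_component[OF assms(1,2)])
  moreover have "card ?C \<le> Suc (card (induced_edges F ?C))"
    using assms(1,2) by (rule card_component_le_Suc_card_edges)
  ultimately have "card (?C \<inter> T) = 0 \<or> card (?C \<inter> T) = 2"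
    by presburger
  then show ?thesis
    by simp
qed

section \<open>Reduced cliques of a triangle-free cubic graph\<close>

lemma finite_edges:
  assumes "simple_graph V E"
  shows "finite E"
proof -
  have "E \<subseteq> Pow V" and "finite V"
    using assms unfolding simple_graph_def by auto
  then show ?thesis
    by (simp add: finite_subset)
qed

lemma LE_subset_Pow: "LE E \<subseteq> Pow E"
  unfolding LE_def by auto

lemma L2_edges_subset: "L2_edges E \<subseteq> LE (LE E)"
  unfolding L2_edges_def by auto

lemma L2_edges_vertex: "f \<in> L2_edges E \<Longrightarrow> w \<in> f \<Longrightarrow> w \<in> LE E"
  using L2_edges_subset LE_subset_Pow by blast

lemma finite_LE: "finite E \<Longrightarrow> finite (LE E)"
  using LE_subset_Pow by (rule finite_subset) simp

lemma finite_L2_edges: "finite E \<Longrightarrow> finite (L2_edges E)"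
  using L2_edges_subset by (rule finite_subset) (intro finite_LE)

lemma doubletons_LE: "doubletons (LE E)"
  unfolding doubletons_def LE_def by blast

lemma doubletons_L2_edges: "doubletons (L2_edges E)"
  using doubletons_LE L2_edges_subset by (rule doubletons_subset)

lemma LE_memI: "e \<in> E \<Longrightarrow> f \<in> E \<Longrightarrow> e \<noteq> f \<Longrightarrow> e \<inter> f \<noteq> {} \<Longrightarrow> {e, f} \<in> LE E"
  unfolding LE_def by blast

lemma LE_memD:
  assumes "{e, f} \<in> LE E"
  shows "e \<in> E" and "f \<in> E" and "e \<noteq> f" and "e \<inter> f \<noteq> {}"
proof -
  obtain e' f' where "{e, f} = {e', f'}" "e' \<in> E" "f' \<in> E" "e' \<noteq> f'" "e' \<inter> f' \<noteq> {}"
    using assms unfolding LE_def by blast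
  then show "e \<in> E" "f \<in> E" "e \<noteq> f" "e \<inter> f \<noteq> {}"
    by (auto simp: doubleton_eq_iff Int_commute)
qed

definition line_nbrs :: "'v set set \<Rightarrow> 'v set \<Rightarrow> 'v set set" where
  "line_nbrs E a = {g\<in>E. g \<noteq> a \<and> a \<inter> g \<noteq> {}}"

lemma Xv_eq:
  assumes "a \<in> E"
  shows "Xv E a = (\<lambda>g. {a, g}) ` line_nbrs E a"
proof (intro equalityI subsetI)
  fix w
  assume "w \<in> Xv E a"
  then obtain e f where w: "w = {e, f}" "e \<in> E" "f \<in> E" "e \<noteq> f" "e \<inter> f \<noteq> {}" and "a \<in> w"
    unfolding Xv_def LE_def by blast
  then consider "a = e" | "a = f"
    by blast
  then show "w \<in> (\<lambda>g. {a, g}) ` line_nbrs E a"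
  proof cases
    case 1
    with w have "f \<in> line_nbrs E a"
      by (simp add: line_nbrs_def)
    with 1 w show ?thesis
      by blast
  next
    case 2
    with w have "e \<in> line_nbrs E a"
      by (simp add: line_nbrs_def Int_commute)
    moreover have "w = {a, e}"
      using 2 w(1) by (simp add: insert_commute)
    ultimately show ?thesis
      by blast
  qed
next
  fix w
  assume "w \<in> (\<lambda>g. {a, g}) ` line_nbrs E a"
  with assms show "w \<in> Xv E a"
    by (auto simp: Xv_def line_nbrs_def intro: LE_memI)
qed

lemma LE_triangle_through_iff:
  assumes ag: "{a, g} \<in> LE E" and ah: "{a, h} \<in> LE E" and "g \<noteq> h"
  shows "(\<exists>e1 e2 e3. {e1, e2} \<in> LE E \<and> {e2, e3} \<in> LE E \<and> {e1, e3} \<in> LE E \<and>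
          {{a, g}, {a, h}} \<subseteq> {{e1, e2}, {e2, e3}, {e1, e3}}) \<longleftrightarrow> {g, h} \<in> LE E"
proof
  assume "\<exists>e1 e2 e3. {e1, e2} \<in> LE E \<and> {e2, e3} \<in> LE E \<and> {e1, e3} \<in> LE E \<and>
        {{a, g}, {a, h}} \<subseteq> {{e1, e2}, {e2, e3}, {e1, e3}}"
  then obtain e1 e2 e3 where T: "{e1, e2} \<in> LE E" "{e2, e3} \<in> LE E" "{e1, e3} \<in> LE E"
    and sub: "{{a, g}, {a, h}} \<subseteq> {{e1, e2}, {e2, e3}, {e1, e3}}"
    by (elim exE conjE) (rule that; assumption)
  have "{a, g} \<in> {{e1, e2}, {e2, e3}, {e1, e3}}" "{a, h} \<in> {{e1, e2}, {e2, e3}, {e1, e3}}"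
    using sub by simp_all
  then have "g \<in> \<Union>{{e1, e2}, {e2, e3}, {e1, e3}}" "h \<in> \<Union>{{e1, e2}, {e2, e3}, {e1, e3}}"
    by (meson UnionI insertCI)+
  then have "g = e1 \<or> g = e2 \<or> g = e3" "h = e1 \<or> h = e2 \<or> h = e3"
    by blast+
  with \<open>g \<noteq> h\<close> have "{g, h} = {e1, e2} \<or> {g, h} = {e2, e3} \<or> {g, h} = {e1, e3}"
    by (elim disjE) (simp_all add: insert_commute)
  with T show "{g, h} \<in> LE E"
    by (elim disjE) simp_all
next
  assume "{g, h} \<in> LE E"
  with ag ah show "\<exists>e1 e2 e3. {e1, e2} \<in> LE E \<and> {e2, e3} \<in> LE E \<and> {e1, e3} \<in> LE E \<and>
        {{a, g}, {a, h}} \<subseteq> {{e1, e2}, {e2, e3}, {e1, e3}}"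
    by (intro exI[of _ a] exI[of _ g] exI[of _ h]) simp
qed

lemma L2_edge_iff_disjoint:
  assumes "a \<in> E" and g: "g \<in> line_nbrs E a" and h: "h \<in> line_nbrs E a" and "g \<noteq> h"
  shows "{{a, g}, {a, h}} \<in> L2_edges E \<longleftrightarrow> g \<inter> h = {}"
proof -
  have gE: "g \<in> E" "g \<noteq> a" "a \<inter> g \<noteq> {}" and hE: "h \<in> E" "h \<noteq> a" "a \<inter> h \<noteq> {}"
    using g h by (simp_all add: line_nbrs_def)
  have ag: "{a, g} \<in> LE E" and ah: "{a, h} \<in> LE E"
    using assms(1) gE hE by (simp_all add: LE_memI)
  have "{a, g} \<noteq> {a, h}"
    using \<open>g \<noteq> h\<close> gE hE by (auto simp: doubleton_eq_iff)
  then have LL: "{{a, g}, {a, h}} \<in> LE (LE E)"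
    using ag ah by (simp add: LE_memI)
  have "{g, h} \<in> LE E \<longleftrightarrow> g \<inter> h \<noteq> {}"
  proof
    assume "{g, h} \<in> LE E"
    then show "g \<inter> h \<noteq> {}"
      by (rule LE_memD(4))
  next
    assume "g \<inter> h \<noteq> {}"
    with gE(1) hE(1) \<open>g \<noteq> h\<close> show "{g, h} \<in> LE E"
      by (rule LE_memI)
  qed
  then show ?thesis
    unfolding L2_edges_def mem_Collect_eq LE_triangle_through_iff[OF ag ah \<open>g \<noteq> h\<close>]
    using LL by simp
qed

lemma Xe_eq:
  assumes "a \<in> E"
  shows "Xe E a = {{{a, g}, {a, h}} | g h. g \<in> line_nbrs E a \<and> h \<in> line_nbrs E a \<and> g \<inter> h = {}}"
proof (intro equalityI subsetI)
  fix f
  assume "f \<in> Xe E a"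
  then have f: "f \<in> L2_edges E" and "f \<subseteq> Xv E a"
    by (simp_all add: Xe_def)
  obtain w w' where ww: "f = {w, w'}" "w \<noteq> w'"
    using doubletons_L2_edges f by (rule doubletonsE)
  with \<open>f \<subseteq> Xv E a\<close> have "w \<in> (\<lambda>g. {a, g}) ` line_nbrs E a" "w' \<in> (\<lambda>g. {a, g}) ` line_nbrs E a"
    unfolding Xv_eq[OF assms] by simp_all
  then obtain g h where gh: "w = {a, g}" "w' = {a, h}" "g \<in> line_nbrs E a" "h \<in> line_nbrs E a"
    by (elim imageE) simp
  with ww have "g \<noteq> h"
    by auto
  with f ww gh have "g \<inter> h = {}"
    using L2_edge_iff_disjoint[OF assms gh(3,4)] by simp
  with ww gh show "f \<in> {{{a, g}, {a, h}} | g h. g \<in> line_nbrs E a \<and> h \<in> line_nbrs E a \<and> g \<inter> h = {}}"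
    by blast
next
  fix f
  assume "f \<in> {{{a, g}, {a, h}} | g h. g \<in> line_nbrs E a \<and> h \<in> line_nbrs E a \<and> g \<inter> h = {}}"
  then obtain g h where f: "f = {{a, g}, {a, h}}"
    and gh: "g \<in> line_nbrs E a" "h \<in> line_nbrs E a" "g \<inter> h = {}"
    by blast
  then have "g \<noteq> h"
    by (auto simp: line_nbrs_def)
  with f gh have "f \<in> L2_edges E"
    using L2_edge_iff_disjoint[OF assms gh(1,2)] by simp
  moreover have "f \<subseteq> Xv E a"
    unfolding f Xv_eq[OF assms] using gh(1,2) by blast
  ultimately show "f \<in> Xe E a"
    by (simp add: Xe_def)
qed

lemma Xe_memI:
  assumes "a \<in> E" and "g \<in> line_nbrs E a" and "h \<in> line_nbrs E a" and "g \<inter> h = {}"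
  shows "{{a, g}, {a, h}} \<in> Xe E a"
  unfolding Xe_eq[OF assms(1)] using assms(2-4) by blast

lemma Xe_memE:
  assumes "f \<in> Xe E a" and "a \<in> E"
  obtains g h where "f = {{a, g}, {a, h}}" and "g \<in> line_nbrs E a" and "h \<in> line_nbrs E a"
    and "g \<inter> h = {}"
  using assms unfolding Xe_eq[OF assms(2)] by blast

lemma Xe_subset_L2_edges: "Xe E e \<subseteq> L2_edges E"
  unfolding Xe_def by blast

lemma Xe_subset_Xv: "f \<in> Xe E e \<Longrightarrow> f \<subseteq> Xv E e"
  unfolding Xe_def by blast

lemma L2_edge_other_end:
  assumes "f \<in> L2_edges E" and "w \<in> f"
  obtains z where "f = {w, z}" and "w \<noteq> z" and "w \<in> LE E" and "z \<in> LE E" and "w \<inter> z \<noteq> {}"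
proof -
  obtain p q where pq: "f = {p, q}" "p \<noteq> q"
    using doubletons_L2_edges assms(1) by (rule doubletonsE)
  obtain z where z: "f = {w, z}" "w \<noteq> z"
  proof (cases "w = p")
    case True
    with pq show ?thesis
      using that by simp
  next
    case False
    with pq assms(2) have "f = {w, p}" "w \<noteq> p"
      by (auto simp: insert_commute)
    with that show ?thesis .
  qed
  have "{w, z} \<in> LE (LE E)"
    using L2_edges_subset assms(1) unfolding z(1) by (rule subsetD)
  with z show ?thesis
    using that LE_memD[of w z "LE E"] by simp
qed

lemma L2_edge_in_Xe:
  assumes "f \<in> L2_edges E" and "w \<in> f" and "w = {g, h}"
  shows "f \<in> Xe E g \<or> f \<in> Xe E h"
proof -
  obtain z where z: "f = {w, z}" "w \<in> LE E" "z \<in> LE E" "w \<inter> z \<noteq> {}"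
    using assms(1,2) by (rule L2_edge_other_end)
  then have "g \<in> z \<or> h \<in> z"
    using assms(3) by auto
  then have "f \<subseteq> Xv E g \<or> f \<subseteq> Xv E h"
    using z assms(3) by (auto simp: Xv_def)
  with assms(1) show ?thesis
    by (auto simp: Xe_def)
qed

lemma L2_edge_not_in_both_Xe:
  assumes "f \<in> Xe E g" and "f \<in> Xe E h" and "w \<in> f" and "w = {g, h}" and "g \<noteq> h"
  shows False
proof -
  have "f \<in> L2_edges E"
    using assms(1) by (simp add: Xe_def)
  then obtain z where z: "f = {w, z}" "w \<noteq> z" "z \<in> LE E"
    using assms(3) by (rule L2_edge_other_end)
  then have "g \<in> z" "h \<in> z"
    using assms(1,2) by (simp_all add: Xe_def Xv_def)
  moreover obtain s t where "z = {s, t}"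
    using doubletons_LE z(3) by (rule doubletonsE)
  ultimately have "z = {g, h}"
    using assms(5) by auto
  with z(2) assms(4) show False
    by simp
qed

lemma edges_at_ends_disjoint:
  assumes sg: "simple_graph V E" and tf: "triangle_free V E" and a: "{u, v} \<in> E" "u \<noteq> v"
    and g: "g \<in> E" "u \<in> g" "g \<noteq> {u, v}" and h: "h \<in> E" "v \<in> h" "h \<noteq> {u, v}"
  shows "g \<inter> h = {}"
proof -
  obtain p where p: "g = {u, p}"
    using sg g(1,2) unfolding simple_graph_def by (metis insertE insert_commute singletonD)
  obtain q where q: "h = {v, q}"
    using sg h(1,2) unfolding simple_graph_def by (metis insertE insert_commute singletonD)
  have "p \<noteq> v" "q \<noteq> u" "p \<noteq> u" "q \<noteq> v"
    using p q g h sg unfolding simple_graph_def by (auto simp: insert_commute)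
  moreover have "p \<noteq> q"
  proof
    assume "p = q"
    with a g h p q have "{u, v} \<in> E" "{v, p} \<in> E" "{u, p} \<in> E"
      by simp_all
    with tf show False
      unfolding triangle_free_def by blast
  qed
  ultimately show ?thesis
    using p q a(2) by auto
qed

lemma edges_at_vertex_other:
  assumes "cubic V E" and "u \<in> V" and "a \<in> E" and "u \<in> a"
  obtains g1 g2 where "{g\<in>E. u \<in> g} - {a} = {g1, g2}" and "g1 \<noteq> g2"
proof -
  have "card ({g\<in>E. u \<in> g} - {a}) = 2"
    using assms unfolding cubic_def by simp
  then show ?thesis
    using that by (auto simp: card_2_iff)
qed

lemma line_nbrs_split:
  assumes sg: "simple_graph V E" and tf: "triangle_free V E" and cb: "cubic V E" and aE: "a \<in> E"
  obtains a1 a2 b1 b2 where "line_nbrs E a = {a1, a2, b1, b2}" and "a1 \<noteq> a2" and "b1 \<noteq> b2"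
    and "a1 \<inter> a2 \<noteq> {}" and "b1 \<inter> b2 \<noteq> {}"
    and "\<And>g h. g \<in> {a1, a2} \<Longrightarrow> h \<in> {b1, b2} \<Longrightarrow> g \<inter> h = {}"
proof -
  obtain u v where uv: "a = {u, v}" "u \<noteq> v" "u \<in> V" "v \<in> V"
    using sg aE unfolding simple_graph_def by blast
  obtain a1 a2 where A: "{g\<in>E. u \<in> g} - {a} = {a1, a2}" "a1 \<noteq> a2"
    using cb uv(3) aE by (rule edges_at_vertex_other) (simp add: uv(1))
  obtain b1 b2 where B: "{g\<in>E. v \<in> g} - {a} = {b1, b2}" "b1 \<noteq> b2"
    using cb uv(4) aE by (rule edges_at_vertex_other) (simp add: uv(1))
  have "a1 \<in> {g\<in>E. u \<in> g} - {a}" "a2 \<in> {g\<in>E. u \<in> g} - {a}"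
    "b1 \<in> {g\<in>E. v \<in> g} - {a}" "b2 \<in> {g\<in>E. v \<in> g} - {a}"
    unfolding A(1) B(1) by simp_all
  then have a12: "a1 \<in> E" "u \<in> a1" "a1 \<noteq> a" "a2 \<in> E" "u \<in> a2" "a2 \<noteq> a"
    and b12: "b1 \<in> E" "v \<in> b1" "b1 \<noteq> a" "b2 \<in> E" "v \<in> b2" "b2 \<noteq> a"
    by simp_all
  have "line_nbrs E a = ({g\<in>E. u \<in> g} - {a}) \<union> ({g\<in>E. v \<in> g} - {a})"
    unfolding line_nbrs_def uv(1) by blast
  then have nbrs: "line_nbrs E a = {a1, a2, b1, b2}"
    unfolding A(1) B(1) by (simp add: insert_commute)
  have cross: "g \<inter> h = {}" if "g \<in> {a1, a2}" and "h \<in> {b1, b2}" for g h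
    using that a12 b12 edges_at_ends_disjoint[OF sg tf aE[unfolded uv(1)] uv(2), of g h]
    unfolding uv(1) by auto
  have "a1 \<inter> a2 \<noteq> {}" "b1 \<inter> b2 \<noteq> {}"
    using a12 b12 by blast+
  from nbrs A(2) B(2) this cross show ?thesis
    by (rule that)
qed

lemma Xe_cross_pairs_iff:
  assumes aE: "a \<in> E" and nbrs: "line_nbrs E a = {a1, a2, b1, b2}"
    and meet: "a1 \<inter> a2 \<noteq> {}" "b1 \<inter> b2 \<noteq> {}"
    and cross: "\<And>g h. g \<in> {a1, a2} \<Longrightarrow> h \<in> {b1, b2} \<Longrightarrow> g \<inter> h = {}"
  shows "f \<in> Xe E a \<longleftrightarrow> (\<exists>g\<in>{a1, a2}. \<exists>h\<in>{b1, b2}. f = {{a, g}, {a, h}})"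
proof
  assume "f \<in> Xe E a"
  then obtain g h where f: "f = {{a, g}, {a, h}}" and g: "g \<in> line_nbrs E a"
    and h: "h \<in> line_nbrs E a" and gh: "g \<inter> h = {}"
    using aE by (rule Xe_memE)
  have "g \<noteq> {}" "h \<noteq> {}"
    using g h by (auto simp: line_nbrs_def)
  with g h gh have "g \<in> {a1, a2} \<and> h \<in> {b1, b2} \<or> h \<in> {a1, a2} \<and> g \<in> {b1, b2}"
    unfolding nbrs using meet by (elim insertE emptyE) (simp_all add: Int_commute)
  moreover have "f = {{a, h}, {a, g}}"
    unfolding f by (rule insert_commute)
  ultimately show "\<exists>g\<in>{a1, a2}. \<exists>h\<in>{b1, b2}. f = {{a, g}, {a, h}}"
    using f by blast
next
  assume "\<exists>g\<in>{a1, a2}. \<exists>h\<in>{b1, b2}. f = {{a, g}, {a, h}}"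
  then obtain g h where gh: "g \<in> {a1, a2}" "h \<in> {b1, b2}" and f: "f = {{a, g}, {a, h}}"
    by blast
  have "g \<in> line_nbrs E a" "h \<in> line_nbrs E a"
    using gh nbrs by auto
  with f cross[OF gh] show "f \<in> Xe E a"
    using Xe_memI[OF aE] by blast
qed

lemma reduced_clique_is_4cycle:
  assumes sg: "simple_graph V E" and tf: "triangle_free V E" and cb: "cubic V E" and aE: "a \<in> E"
  obtains x1 x2 x3 x4 where "cyc4 E a x1 x2 x3 x4"
proof -
  obtain a1 a2 b1 b2 where nbrs: "line_nbrs E a = {a1, a2, b1, b2}" and "a1 \<noteq> a2" "b1 \<noteq> b2"
    and meet: "a1 \<inter> a2 \<noteq> {}" "b1 \<inter> b2 \<noteq> {}"
    and cross: "\<And>g h. g \<in> {a1, a2} \<Longrightarrow> h \<in> {b1, b2} \<Longrightarrow> g \<inter> h = {}"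
    by (rule line_nbrs_split[OF assms]) blast
  have "g \<noteq> a \<and> g \<noteq> {}" if "g \<in> {a1, a2, b1, b2}" for g
    using that unfolding nbrs[symmetric] line_nbrs_def by auto
  then have "a1 \<noteq> b1" "a1 \<noteq> b2" "a2 \<noteq> b1" "a2 \<noteq> b2"
    and not_a: "a1 \<noteq> a" "a2 \<noteq> a" "b1 \<noteq> a" "b2 \<noteq> a"
    using cross by (metis Int_absorb insertCI)+
  \<comment> \<open>a1, a2 share one end of a and b1, b2 the other, so exactly the cross pairs are adjacent\<close>
  define x1 x2 x3 x4 where "x1 = {a, a1}" and "x2 = {a, b1}" and "x3 = {a, a2}" and "x4 = {a, b2}"
  have distinct: "distinct [x1, x2, x3, x4]"
    using \<open>a1 \<noteq> a2\<close> \<open>b1 \<noteq> b2\<close> \<open>a1 \<noteq> b1\<close> \<open>a1 \<noteq> b2\<close> \<open>a2 \<noteq> b1\<close> \<open>a2 \<noteq> b2\<close> not_a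
    by (simp add: x1_def x2_def x3_def x4_def doubleton_eq_iff)
  have Xv: "Xv E a = {x1, x2, x3, x4}"
    unfolding Xv_eq[OF aE] nbrs x1_def x2_def x3_def x4_def by auto
  have x_edges: "{x1, x2} = {{a, a1}, {a, b1}}" "{x2, x3} = {{a, a2}, {a, b1}}"
    "{x3, x4} = {{a, a2}, {a, b2}}" "{x4, x1} = {{a, a1}, {a, b2}}"
    unfolding x1_def x2_def x3_def x4_def by (rule refl insert_commute)+
  have Xe_iff: "f \<in> Xe E a \<longleftrightarrow> (\<exists>g\<in>{a1, a2}. \<exists>h\<in>{b1, b2}. f = {{a, g}, {a, h}})" for f
    by (rule Xe_cross_pairs_iff[OF aE nbrs meet]) (rule cross)
  have "Xe E a = {{x1, x2}, {x2, x3}, {x3, x4}, {x4, x1}}"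
  proof (intro equalityI subsetI)
    fix f
    assume "f \<in> Xe E a"
    then obtain g h where "g \<in> {a1, a2}" "h \<in> {b1, b2}" "f = {{a, g}, {a, h}}"
      unfolding Xe_iff by blast
    then show "f \<in> {{x1, x2}, {x2, x3}, {x3, x4}, {x4, x1}}"
      unfolding x_edges by (elim insertE emptyE) simp_all
  next
    fix f
    assume "f \<in> {{x1, x2}, {x2, x3}, {x3, x4}, {x4, x1}}"
    then show "f \<in> Xe E a"
      unfolding x_edges Xe_iff by (elim insertE emptyE) simp_all
  qed
  with distinct Xv show ?thesis
    by (intro that) (simp only: cyc4_def)
qed

section \<open>Valid labelings and their open cycles\<close>

lemma cyc4_rotate: "cyc4 E e x1 x2 x3 x4 \<Longrightarrow> cyc4 E e x2 x3 x4 x1"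
  unfolding cyc4_def by (auto simp: insert_commute)

lemma Xe_edges_at_first:
  assumes "cyc4 E e x1 x2 x3 x4"
  shows "{f\<in>Xe E e. x1 \<in> f} = {{x1, x2}, {x4, x1}}"
proof (intro equalityI subsetI)
  fix f
  assume "f \<in> {f\<in>Xe E e. x1 \<in> f}"
  then have "f \<in> {{x1, x2}, {x2, x3}, {x3, x4}, {x4, x1}}" and "x1 \<in> f"
    using assms by (simp_all add: cyc4_def)
  then show "f \<in> {{x1, x2}, {x4, x1}}"
    using assms by (elim insertE emptyE) (simp_all add: cyc4_def)
next
  fix f
  assume "f \<in> {{x1, x2}, {x4, x1}}"
  then show "f \<in> {f\<in>Xe E e. x1 \<in> f}"
    using assms by (auto simp: cyc4_def)
qed

lemma valid_labeling_01: "valid_labeling E lam \<Longrightarrow> f \<in> L2_edges E \<Longrightarrow> lam f \<in> {0, 1}"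
  unfolding valid_labeling_def by blast

lemma valid_labeling_first_edges_differ:
  assumes "valid_labeling E lam" and "e \<in> E" and c: "cyc4 E e x1 x2 x3 x4"
  shows "lam {x1, x2} \<noteq> lam {x4, x1}"
proof -
  have "x1 \<in> Xv E e"
    using c by (simp add: cyc4_def)
  then obtain f1 f2 where "f1 \<in> {f\<in>Xe E e. x1 \<in> f}" "f2 \<in> {f\<in>Xe E e. x1 \<in> f}" "lam f1 \<noteq> lam f2"
    using assms(1,2) unfolding valid_labeling_def by blast
  then show ?thesis
    unfolding Xe_edges_at_first[OF c] by auto
qed

lemma valid_labeling_alternates:
  assumes v: "valid_labeling E lam" and e: "e \<in> E" and c: "cyc4 E e x1 x2 x3 x4"
  shows "lam {x1, x2} \<in> {0, 1}" and "lam {x2, x3} = 1 - lam {x1, x2}"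
    and "lam {x3, x4} = lam {x1, x2}" and "lam {x4, x1} = 1 - lam {x1, x2}"
proof -
  have c2: "cyc4 E e x2 x3 x4 x1" and c3: "cyc4 E e x3 x4 x1 x2"
    using c by (simp_all add: cyc4_rotate)
  have "{{x1, x2}, {x2, x3}, {x3, x4}, {x4, x1}} \<subseteq> L2_edges E"
    using c Xe_subset_L2_edges[of E e] by (simp add: cyc4_def)
  then have "lam {x1, x2} \<in> {0, 1}" "lam {x2, x3} \<in> {0, 1}" "lam {x3, x4} \<in> {0, 1}" "lam {x4, x1} \<in> {0, 1}"
    using valid_labeling_01[OF v] by simp_all
  moreover have "lam {x1, x2} \<noteq> lam {x4, x1}"
    by (rule valid_labeling_first_edges_differ[OF v e c])
  moreover have "lam {x2, x3} \<noteq> lam {x1, x2}"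
    by (rule valid_labeling_first_edges_differ[OF v e c2])
  moreover have "lam {x3, x4} \<noteq> lam {x2, x3}"
    by (rule valid_labeling_first_edges_differ[OF v e c3])
  ultimately show "lam {x1, x2} \<in> {0, 1}" "lam {x2, x3} = 1 - lam {x1, x2}"
    "lam {x3, x4} = lam {x1, x2}" "lam {x4, x1} = 1 - lam {x1, x2}"
    by auto
qed

lemma card_open_Xe_edges_at:
  assumes v: "valid_labeling E lam" and e: "e \<in> E" and c: "cyc4 E e x1 x2 x3 x4"
    and w: "w \<in> Xv E e"
  shows "card {f\<in>Xe E e. lam f = 1 \<and> w \<in> f} = 1"
proof -
  have first: "card {f\<in>Xe E e. lam f = 1 \<and> y1 \<in> f} = 1" if c': "cyc4 E e y1 y2 y3 y4" for y1 y2 y3 y4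
  proof -
    have "{f\<in>Xe E e. lam f = 1 \<and> y1 \<in> f} = {f\<in>{f\<in>Xe E e. y1 \<in> f}. lam f = 1}"
      by auto
    also have "\<dots> = {f\<in>{{y1, y2}, {y4, y1}}. lam f = 1}"
      unfolding Xe_edges_at_first[OF c'] ..
    finally have eq: "{f\<in>Xe E e. lam f = 1 \<and> y1 \<in> f} = {f\<in>{{y1, y2}, {y4, y1}}. lam f = 1}" .
    have "lam {y1, y2} \<in> {0, 1}" "lam {y4, y1} = 1 - lam {y1, y2}"
      using valid_labeling_alternates[OF v e c'] by simp_all
    then have "{f\<in>{{y1, y2}, {y4, y1}}. lam f = 1} = {{y1, y2}} \<or>
        {f\<in>{{y1, y2}, {y4, y1}}. lam f = 1} = {{y4, y1}}"
      by auto
    then show ?thesis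
      unfolding eq by auto
  qed
  have "w = x1 \<or> w = x2 \<or> w = x3 \<or> w = x4"
    using c w by (simp add: cyc4_def)
  moreover have "cyc4 E e x2 x3 x4 x1" "cyc4 E e x3 x4 x1 x2" "cyc4 E e x4 x1 x2 x3"
    using c by (simp_all add: cyc4_rotate)
  ultimately show ?thesis
    using first c by blast
qed

lemma card_open_edges_at:
  assumes sg: "simple_graph V E" and tf: "triangle_free V E" and cb: "cubic V E"
    and v: "valid_labeling E lam" and w: "w \<in> LE E"
  shows "card {f\<in>open_edges E lam. w \<in> f} = 2"
proof -
  obtain g h where gh: "w = {g, h}"
    using doubletons_LE w by (rule doubletonsE)
  have "g \<in> E" "h \<in> E" "g \<noteq> h"
    using w gh LE_memD by blast+
  have "w \<in> Xv E g" "w \<in> Xv E h"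
    using w gh by (simp_all add: Xv_def)
  \<comment> \<open>w lies in exactly the two reduced cliques X_g and X_h and has one open edge in each\<close>
  let ?A = "{f\<in>Xe E g. lam f = 1 \<and> w \<in> f}" and ?B = "{f\<in>Xe E h. lam f = 1 \<and> w \<in> f}"
  have "{f\<in>open_edges E lam. w \<in> f} = ?A \<union> ?B"
    using L2_edge_in_Xe[OF _ _ gh] Xe_subset_L2_edges unfolding open_edges_def by blast
  moreover have "?A \<inter> ?B = {}"
    using L2_edge_not_in_both_Xe[OF _ _ _ gh \<open>g \<noteq> h\<close>] by blast
  moreover have "card ?A = 1"
    using reduced_clique_is_4cycle[OF sg tf cb \<open>g \<in> E\<close>]
      card_open_Xe_edges_at[OF v \<open>g \<in> E\<close> _ \<open>w \<in> Xv E g\<close>] by metis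
  moreover have "card ?B = 1"
    using reduced_clique_is_4cycle[OF sg tf cb \<open>h \<in> E\<close>]
      card_open_Xe_edges_at[OF v \<open>h \<in> E\<close> _ \<open>w \<in> Xv E h\<close>] by metis
  ultimately show ?thesis
    by (simp add: card_Un_disjoint card_ge_0_finite)
qed

lemma component_eq_reach_Union:
  assumes "x \<in> \<Union>F"
  shows "{y\<in>\<Union>F. reach F x y} = component F x"
proof (intro equalityI subsetI)
  fix y
  assume "y \<in> component F x"
  then have "reach F x y"
    by simp
  moreover have "y \<in> \<Union>F"
    using reach_in_Union[OF \<open>reach F x y\<close>] assms by (cases "y = x") auto
  ultimately show "y \<in> {y\<in>\<Union>F. reach F x y}"
    by simp
qed simp

lemma Gamma_iff:
  "\<gamma> \<in> Gamma E lam \<longleftrightarrow> (\<exists>x\<in>\<Union>(open_edges E lam). \<gamma> = component (open_edges E lam) x)"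
proof -
  have "\<gamma> \<in> Gamma E lam \<longleftrightarrow>
      (\<exists>x. x \<in> \<Union>(open_edges E lam) \<and> \<gamma> = {y\<in>\<Union>(open_edges E lam). reach (open_edges E lam) x y})"
    unfolding Gamma_def by blast
  also have "\<dots> \<longleftrightarrow> (\<exists>x\<in>\<Union>(open_edges E lam). \<gamma> = component (open_edges E lam) x)"
    using component_eq_reach_Union by metis
  finally show ?thesis .
qed

lemma Gamma_eq_component:
  assumes "\<gamma> \<in> Gamma E lam" and "z \<in> \<gamma>"
  shows "\<gamma> = component (open_edges E lam) z"
  using assms component_eq unfolding Gamma_iff by fastforce

lemma component_in_Gamma:
  "x \<in> \<Union>(open_edges E lam) \<Longrightarrow> component (open_edges E lam) x \<in> Gamma E lam"
  unfolding Gamma_iff by blast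

lemma card_open_edges_outside_Xe_at:
  assumes sg: "simple_graph V E" and tf: "triangle_free V E" and cb: "cubic V E"
    and v: "valid_labeling E lam" and e: "e \<in> E" and w: "w \<in> LE E"
  shows "card {f\<in>open_edges E lam - Xe E e. w \<in> f} = (if w \<in> Xv E e then 1 else 2)"
proof -
  let ?out = "{f\<in>open_edges E lam - Xe E e. w \<in> f}" and ?in = "{f\<in>Xe E e. lam f = 1 \<and> w \<in> f}"
  have "{f\<in>open_edges E lam. w \<in> f} = ?out \<union> ?in"
    using Xe_subset_L2_edges by (auto simp: open_edges_def)
  moreover have "card (?out \<union> ?in) = card ?out + card ?in"
  proof (rule card_Un_disjoint)
    have finL2: "finite (L2_edges E)"
      using finite_L2_edges[OF finite_edges[OF sg]] .
    show "finite ?out"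
      by (rule finite_subset[OF _ finL2]) (auto simp: open_edges_def)
    show "finite ?in"
      by (rule finite_subset[OF _ finL2]) (use Xe_subset_L2_edges in blast)
  qed blast
  ultimately have "card ?out + card ?in = 2"
    using card_open_edges_at[OF sg tf cb v w] by simp
  moreover have "card ?in = (if w \<in> Xv E e then 1 else 0)"
  proof (cases "w \<in> Xv E e")
    case True
    obtain x1 x2 x3 x4 where "cyc4 E e x1 x2 x3 x4"
      using sg tf cb e by (rule reduced_clique_is_4cycle)
    with True show ?thesis
      using card_open_Xe_edges_at[OF v e] by simp
  next
    case False
    then have "?in = {}"
      using Xe_subset_Xv by blast
    then have "card ?in = 0"
      by (simp only: card.empty)
    with False show ?thesis
      by simp
  qed
  ultimately show ?thesis
    by auto
qed

lemma card_component_Int_Xv: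
  assumes sg: "simple_graph V E" and tf: "triangle_free V E" and cb: "cubic V E"
    and v: "valid_labeling E lam" and e: "e \<in> E" and x: "x \<in> LE E"
  shows "card (component (open_edges E lam - Xe E e) x \<inter> Xv E e) \<in> {0, 2}"
proof (rule card_component_Int_degree_one)
  let ?R = "open_edges E lam - Xe E e"
  show "finite ?R"
    using finite_L2_edges[OF finite_edges[OF sg]] by (simp add: open_edges_def)
  show "doubletons ?R"
    using doubletons_L2_edges by (rule doubletons_subset) (auto simp: open_edges_def)
  fix w
  assume "w \<in> component ?R x"
  then have "w \<in> LE E"
  proof (cases "w = x")
    case False
    then have "w \<in> \<Union>?R"
      using reach_in_Union \<open>w \<in> component ?R x\<close> by simp
    then show ?thesis
      by (auto simp: open_edges_def intro: L2_edges_vertex)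
  qed (simp add: x)
  then show "card {f\<in>?R. w \<in> f} = (if w \<in> Xv E e then 1 else 2)"
    by (rule card_open_edges_outside_Xe_at[OF sg tf cb v e])
qed

section \<open>Label inversion\<close>

lemma open_edges_flip:
  assumes "valid_labeling E lam"
  shows "open_edges E (flip E e lam) = (open_edges E lam - Xe E e) \<union> (Xe E e - open_edges E lam)"
proof (intro equalityI subsetI)
  fix f
  assume "f \<in> open_edges E (flip E e lam)"
  then show "f \<in> (open_edges E lam - Xe E e) \<union> (Xe E e - open_edges E lam)"
    by (cases "f \<in> Xe E e") (auto simp: open_edges_def flip_def Xe_def)
next
  fix f
  assume f: "f \<in> (open_edges E lam - Xe E e) \<union> (Xe E e - open_edges E lam)"
  show "f \<in> open_edges E (flip E e lam)"
  proof (cases "f \<in> Xe E e")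
    case True
    then have "f \<in> L2_edges E"
      using Xe_subset_L2_edges by blast
    with True f show ?thesis
      using valid_labeling_01[OF assms \<open>f \<in> L2_edges E\<close>] by (auto simp: open_edges_def flip_def)
  next
    case False
    with f show ?thesis
      by (simp add: open_edges_def flip_def)
  qed
qed

locale open_presentation =
  fixes V :: "'v set" and E :: "'v set set" and lam :: "'v labeling" and e :: "'v set"
    and x1 x2 x3 x4 :: "'v set set"
  assumes sg: "simple_graph V E" and tf: "triangle_free V E" and cb: "cubic V E"
    and valid: "valid_labeling E lam" and e: "e \<in> E" and cyc: "cyc4 E e x1 x2 x3 x4"
    and open12: "lam {x1, x2} = 1"
begin

abbreviation "lam' \<equiv> flip E e lam"
abbreviation "R \<equiv> open_edges E lam - Xe E e"

lemma Xe_eq4: "Xe E e = {{x1, x2}, {x2, x3}, {x3, x4}, {x4, x1}}"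
  using cyc by (simp add: cyc4_def)

lemma Xv_eq4: "Xv E e = {x1, x2, x3, x4}"
  using cyc by (simp add: cyc4_def)

lemma distinct4: "distinct [x1, x2, x3, x4]"
  using cyc by (simp add: cyc4_def)

lemma Xe_labels: "lam {x2, x3} = 0" "lam {x3, x4} = 1" "lam {x4, x1} = 0"
  using valid_labeling_alternates[OF valid e cyc] open12 by simp_all

lemma flip_labels: "lam' {x1, x2} = 0" "lam' {x2, x3} = 1" "lam' {x3, x4} = 0" "lam' {x4, x1} = 1"
  unfolding flip_def Xe_eq4 using open12 Xe_labels by simp_all

lemma open_Xe_edge_cases: "f \<in> Xe E e \<Longrightarrow> lam f = 1 \<Longrightarrow> f = {x1, x2} \<or> f = {x3, x4}"
  unfolding Xe_eq4 using Xe_labels by auto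

lemma flip_open_Xe_edge_cases: "f \<in> Xe E e \<Longrightarrow> lam' f = 1 \<Longrightarrow> f = {x2, x3} \<or> f = {x4, x1}"
  unfolding Xe_eq4 using flip_labels by auto

lemma open_Xe: "{x1, x2} \<in> open_edges E lam" "{x3, x4} \<in> open_edges E lam"
  "{x2, x3} \<notin> open_edges E lam" "{x4, x1} \<notin> open_edges E lam"
proof -
  have "{x1, x2} \<in> L2_edges E" "{x3, x4} \<in> L2_edges E"
    using Xe_subset_L2_edges[of E e] unfolding Xe_eq4 by simp_all
  then show "{x1, x2} \<in> open_edges E lam" "{x3, x4} \<in> open_edges E lam"
    "{x2, x3} \<notin> open_edges E lam" "{x4, x1} \<notin> open_edges E lam"
    using open12 Xe_labels by (simp_all add: open_edges_def)
qed

lemma R_eq: "R = open_edges E lam - {{x1, x2}, {x3, x4}}"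
proof -
  have diff: "S - {a, b, c, d} = S - {a, c}" if "b \<notin> S" "d \<notin> S" for S :: "'x set" and a b c d
    using that by blast
  show ?thesis
    unfolding Xe_eq4 by (rule diff[OF open_Xe(3,4)])
qed

lemma open_flip_eq: "open_edges E lam' = R \<union> {{x2, x3}, {x4, x1}}"
proof -
  have diff: "{a, b, c, d} - S = {b, d}" if "a \<in> S" "c \<in> S" "b \<notin> S" "d \<notin> S"
    for S :: "'x set" and a b c d
    using that by blast
  have "Xe E e - open_edges E lam = {{x2, x3}, {x4, x1}}"
    unfolding Xe_eq4 by (rule diff[OF open_Xe])
  then show ?thesis
    using open_edges_flip[OF valid] by simp
qed

lemma reach_R_open: "reach R a b \<Longrightarrow> reach (open_edges E lam) a b"
  by (erule reach_mono) blast

lemma reach_R_flip: "reach R a b \<Longrightarrow> reach (open_edges E lam') a b"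
  by (erule reach_mono) (simp add: open_flip_eq subset_insertI2)

lemma reach_open_Xe: "reach (open_edges E lam) x2 x1" "reach (open_edges E lam) x4 x3"
  using reach_sym[OF reach_edge[OF open_Xe(1)]] reach_sym[OF reach_edge[OF open_Xe(2)]] .

lemma reach_flip_Xe: "reach (open_edges E lam') x2 x3" "reach (open_edges E lam') x3 x2"
  "reach (open_edges E lam') x4 x1" "reach (open_edges E lam') x1 x4"
proof -
  have "{x2, x3} \<in> open_edges E lam'" "{x4, x1} \<in> open_edges E lam'"
    by (simp_all add: open_flip_eq)
  then show "reach (open_edges E lam') x2 x3" "reach (open_edges E lam') x3 x2"
    "reach (open_edges E lam') x4 x1" "reach (open_edges E lam') x1 x4"
    by (auto intro: reach_edge reach_sym)
qed

lemma reach_R_partner: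
  assumes "x \<in> Xv E e" and "component R x \<inter> Xv E e \<subseteq> {x, y}"
  shows "reach R x y"
proof (rule ccontr)
  assume "\<not> reach R x y"
  have "component R x \<inter> Xv E e = {x}"
  proof (intro equalityI subsetI)
    fix z
    assume z: "z \<in> component R x \<inter> Xv E e"
    with assms(2) have "z = x \<or> z = y"
      by blast
    with z \<open>\<not> reach R x y\<close> show "z \<in> {x}"
      by auto
  qed (use assms(1) in simp)
  moreover have "x \<in> LE E"
    using assms(1) by (simp add: Xv_def)
  ultimately show False
    using card_component_Int_Xv[OF sg tf cb valid e \<open>x \<in> LE E\<close>] by simp
qed

lemma not_reach_R_all_corners:
  assumes "reach R x2 x3" and "reach R x4 x1"
  shows "\<not> reach R x2 x1"
proof
  assume "reach R x2 x1"
  moreover have "reach R x2 x4"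
    using reach_trans[OF \<open>reach R x2 x1\<close> reach_sym[OF assms(2)]] .
  ultimately have "{x1, x2, x3, x4} \<subseteq> component R x2"
    using assms(1) by simp
  then have "component R x2 \<inter> Xv E e = {x1, x2, x3, x4}"
    unfolding Xv_eq4 by (rule Int_absorb1)
  moreover have "x2 \<in> LE E"
    using Xv_eq4 by (auto simp: Xv_def)
  ultimately show False
    using card_component_Int_Xv[OF sg tf cb valid e, of x2] distinct4 by simp
qed

lemma separated_if_two_cycles:
  assumes "\<exists>\<gamma>1\<in>Gamma E lam. \<exists>\<gamma>2\<in>Gamma E lam. \<gamma>1 \<noteq> \<gamma>2 \<and>
      (\<exists>f\<in>Xe E e. lam f = 1 \<and> f \<subseteq> \<gamma>1) \<and> (\<exists>f\<in>Xe E e. lam f = 1 \<and> f \<subseteq> \<gamma>2)"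
  shows "\<not> reach (open_edges E lam) x1 x3"
proof
  assume r13: "reach (open_edges E lam) x1 x3"
  have "\<gamma> = component (open_edges E lam) x1"
    if "\<gamma> \<in> Gamma E lam" "f \<in> Xe E e" "lam f = 1" "f \<subseteq> \<gamma>" for \<gamma> f
  proof -
    from that(2,3) have "x1 \<in> \<gamma> \<or> x3 \<in> \<gamma>"
      using that(4) by (auto dest: open_Xe_edge_cases)
    then show ?thesis
      using Gamma_eq_component[OF that(1)] component_eq[OF r13] by auto
  qed
  moreover obtain \<gamma>1 \<gamma>2 f1 f2 where "\<gamma>1 \<in> Gamma E lam" "\<gamma>2 \<in> Gamma E lam" "\<gamma>1 \<noteq> \<gamma>2"
    and "f1 \<in> Xe E e" "lam f1 = 1" "f1 \<subseteq> \<gamma>1" and "f2 \<in> Xe E e" "lam f2 = 1" "f2 \<subseteq> \<gamma>2"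
    using assms by blast
  ultimately show False
    by metis
qed

lemma reach_flip_cycle:
  assumes "reach R a b" and "reach (open_edges E lam') x a"
  shows "reach (cyc_edges E lam' (component (open_edges E lam') x) - {{x2, x3}, {x4, x1}}) a b"
proof -
  have "{x2, x3} \<notin> R" "{x4, x1} \<notin> R"
    by (simp_all add: Xe_eq4)
  then have "cyc_edges E lam' \<gamma> - {{x2, x3}, {x4, x1}} = induced_edges R \<gamma>" for \<gamma>
    unfolding cyc_edges_def induced_edges_def open_flip_eq by blast
  moreover have "component R a \<subseteq> component (open_edges E lam') x"
  proof
    fix y
    assume "y \<in> component R a"
    then show "y \<in> component (open_edges E lam') x"
      using reach_trans[OF assms(2) reach_R_flip] by simp
  qed
  ultimately show ?thesis
    using reach_within_component[OF assms(1)] by simp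
qed

lemma flip_self_intersection:
  assumes "reach (open_edges E lam') x1 x2" and "reach (open_edges E lam') x1 x3"
  shows "self_intersection E lam' e (component (open_edges E lam') x1)"
  unfolding self_intersection_def
proof (intro conjI ballI impI)
  have "{x4, x1} \<in> open_edges E lam'"
    by (simp add: open_flip_eq)
  then show "component (open_edges E lam') x1 \<in> Gamma E lam'"
    by (intro component_in_Gamma) blast
  show "f \<subseteq> component (open_edges E lam') x1" if "f \<in> Xe E e" "lam' f = 1" for f
    using flip_open_Xe_edge_cases[OF that] assms reach_flip_Xe(4) by auto
qed

lemma reach_cyc_edges_R:
  "reach (cyc_edges E lam \<gamma> - {{x1, x2}, {x3, x4}}) a b \<Longrightarrow> reach R a b"
  by (erule reach_mono) (auto simp: R_eq cyc_edges_def)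

lemma R_pairs_if_separated:
  assumes sep: "\<not> reach (open_edges E lam) x1 x3"
  shows "reach R x1 x2" and "reach R x3 x4"
proof -
  have corners: "z \<in> {x1, x2, x3, x4} \<and> reach (open_edges E lam) a z"
    if "z \<in> component R a \<inter> Xv E e" for a z
    using that reach_R_open by (simp add: Xv_eq4)
  have x14: "\<not> reach (open_edges E lam) x1 x4"
    using sep reach_trans[OF _ reach_open_Xe(2), of x1] by blast
  have x31: "\<not> reach (open_edges E lam) x3 x1"
    using sep reach_sym[of "open_edges E lam" x3 x1] by blast
  have x32: "\<not> reach (open_edges E lam) x3 x2"
    using x31 reach_trans[OF _ reach_open_Xe(1), of x3] by blast
  show "reach R x1 x2"
  proof (rule reach_R_partner)
    show "x1 \<in> Xv E e"
      by (simp add: Xv_eq4)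
    show "component R x1 \<inter> Xv E e \<subseteq> {x1, x2}"
      using corners sep x14 by blast
  qed
  show "reach R x3 x4"
  proof (rule reach_R_partner)
    show "x3 \<in> Xv E e"
      by (simp add: Xv_eq4)
    show "component R x3 \<inter> Xv E e \<subseteq> {x3, x4}"
      using corners x31 x32 by blast
  qed
qed

lemma flip_typeB:
  assumes r12: "reach R x1 x2" and r34: "reach R x3 x4"
  shows "typeB E lam' e"
proof -
  let ?C = "component (open_edges E lam') x1"
  have r12': "reach (open_edges E lam') x1 x2"
    using r12 by (rule reach_R_flip)
  have r13': "reach (open_edges E lam') x1 x3"
    using reach_trans[OF r12' reach_flip_Xe(1)] .
  show ?thesis
    unfolding typeB_def
  proof (intro exI conjI)
    show "self_intersection E lam' e ?C"
      using r12' r13' by (rule flip_self_intersection)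
    show "cyc4 E e x2 x3 x4 x1"
      using cyc by (rule cyc4_rotate)
    show "lam' {x2, x3} = 1" "lam' {x4, x1} = 1"
      by (simp_all add: flip_labels)
    show "reach (cyc_edges E lam' ?C - {{x2, x3}, {x4, x1}}) x3 x4"
      using r34 r13' by (rule reach_flip_cycle)
    show "reach (cyc_edges E lam' ?C - {{x2, x3}, {x4, x1}}) x1 x2"
      using r12 reach_refl by (rule reach_flip_cycle)
  qed
qed

lemma flip_separates:
  assumes r23: "reach R x2 x3" and r41: "reach R x4 x1"
  shows "\<exists>\<gamma>1\<in>Gamma E lam'. \<exists>\<gamma>2\<in>Gamma E lam'. \<gamma>1 \<noteq> \<gamma>2 \<and>
           (\<exists>f1\<in>Xe E e. \<exists>f2\<in>Xe E e. f1 \<noteq> f2 \<and>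
              lam' f1 = 1 \<and> lam' f2 = 1 \<and> f1 \<subseteq> \<gamma>1 \<and> f2 \<subseteq> \<gamma>2)"
proof -
  have "\<not> reach (open_edges E lam') x2 x1"
  proof
    assume "reach (open_edges E lam') x2 x1"
    then have "reach R x2 x1"
    proof (rule reach_cover)
      fix p q
      assume "{p, q} \<in> open_edges E lam'"
      then have "{p, q} \<in> R \<or> (p = x2 \<and> q = x3) \<or> (p = x3 \<and> q = x2) \<or> (p = x4 \<and> q = x1) \<or> (p = x1 \<and> q = x4)"
        unfolding open_flip_eq by (auto simp: doubleton_eq_iff)
      then show "reach R p q"
        using r23 r41 reach_sym[OF r23] reach_sym[OF r41]
        by (elim disjE conjE) (simp_all add: reach_edge)
    qed
    with not_reach_R_all_corners[OF r23 r41] show False ..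
  qed
  then have "component (open_edges E lam') x2 \<noteq> component (open_edges E lam') x1"
    by (metis in_component_iff reach_refl)
  moreover have "component (open_edges E lam') x2 \<in> Gamma E lam'"
    "component (open_edges E lam') x1 \<in> Gamma E lam'"
    by (intro component_in_Gamma; simp add: open_flip_eq)+
  moreover have "\<exists>f1\<in>Xe E e. \<exists>f2\<in>Xe E e. f1 \<noteq> f2 \<and> lam' f1 = 1 \<and> lam' f2 = 1 \<and>
      f1 \<subseteq> component (open_edges E lam') x2 \<and> f2 \<subseteq> component (open_edges E lam') x1"
  proof (rule bexI[where x = "{x2, x3}"], rule bexI[where x = "{x4, x1}"])
    show "{x2, x3} \<in> Xe E e" "{x4, x1} \<in> Xe E e"
      by (simp_all add: Xe_eq4)
    have "{x2, x3} \<noteq> {x4, x1}"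
      using distinct4 by (auto simp: doubleton_eq_iff)
    moreover have "{x2, x3} \<subseteq> component (open_edges E lam') x2"
      "{x4, x1} \<subseteq> component (open_edges E lam') x1"
      using reach_flip_Xe by simp_all
    ultimately show "{x2, x3} \<noteq> {x4, x1} \<and> lam' {x2, x3} = 1 \<and> lam' {x4, x1} = 1 \<and>
        {x2, x3} \<subseteq> component (open_edges E lam') x2 \<and> {x4, x1} \<subseteq> component (open_edges E lam') x1"
      using flip_labels by simp
  qed
  ultimately show ?thesis
    by blast
qed

lemma flip_typeA:
  assumes r13: "reach R x1 x3" and r24: "reach R x2 x4"
  shows "typeA E lam' e"
proof -
  let ?C = "component (open_edges E lam') x1"
  have r12: "reach (open_edges E lam') x1 x2"
    using reach_trans[OF reach_flip_Xe(4) reach_sym[OF reach_R_flip[OF r24]]] .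
  have r13': "reach (open_edges E lam') x1 x3"
    using r13 by (rule reach_R_flip)
  show ?thesis
    unfolding typeA_def
  proof (intro exI conjI)
    show "self_intersection E lam' e ?C"
      using r12 r13' by (rule flip_self_intersection)
    show "cyc4 E e x2 x3 x4 x1"
      using cyc by (rule cyc4_rotate)
    show "lam' {x2, x3} = 1" "lam' {x4, x1} = 1"
      by (simp_all add: flip_labels)
    show "reach (cyc_edges E lam' ?C - {{x2, x3}, {x4, x1}}) x2 x4"
      using r24 r12 by (rule reach_flip_cycle)
    show "reach (cyc_edges E lam' ?C - {{x2, x3}, {x4, x1}}) x3 x1"
      using reach_sym[OF r13] r13' by (rule reach_flip_cycle)
  qed
qed

end

lemma open_presentation_exists:
  assumes sg: "simple_graph V E" and tf: "triangle_free V E" and cb: "cubic V E"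
    and valid: "valid_labeling E lam" and e: "e \<in> E"
  obtains x1 x2 x3 x4 where "open_presentation V E lam e x1 x2 x3 x4"
proof -
  obtain x1 x2 x3 x4 where c: "cyc4 E e x1 x2 x3 x4"
    using sg tf cb e by (rule reduced_clique_is_4cycle)
  show ?thesis
  proof (cases "lam {x1, x2} = 1")
    case True
    with sg tf cb valid e c have "open_presentation V E lam e x1 x2 x3 x4"
      by (rule open_presentation.intro)
    then show ?thesis
      by (rule that)
  next
    case False
    then have "lam {x2, x3} = 1"
      using valid_labeling_alternates[OF valid e c] by auto
    with sg tf cb valid e cyc4_rotate[OF c] have "open_presentation V E lam e x2 x3 x4 x1"
      by (rule open_presentation.intro)
    then show ?thesis
      by (rule that)
  qed
qed

lemma typeB_open_presentation:
  assumes "typeB E lam e" and "simple_graph V E" and "triangle_free V E" and "cubic V E"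
    and "valid_labeling E lam" and "e \<in> E"
  obtains x1 x2 x3 x4 where "open_presentation V E lam e x1 x2 x3 x4"
    and "reach (open_edges E lam - Xe E e) x2 x3" and "reach (open_edges E lam - Xe E e) x4 x1"
proof -
  obtain \<gamma> x1 x2 x3 x4 where "cyc4 E e x1 x2 x3 x4" "lam {x1, x2} = 1"
    and r: "reach (cyc_edges E lam \<gamma> - {{x1, x2}, {x3, x4}}) x2 x3"
      "reach (cyc_edges E lam \<gamma> - {{x1, x2}, {x3, x4}}) x4 x1"
    using assms(1) unfolding typeB_def by blast
  with assms(2-6) have P: "open_presentation V E lam e x1 x2 x3 x4"
    by (intro open_presentation.intro)
  with r show ?thesis
    using that open_presentation.reach_cyc_edges_R by blast
qed

lemma typeA_open_presentation:
  assumes "typeA E lam e" and "simple_graph V E" and "triangle_free V E" and "cubic V E"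
    and "valid_labeling E lam" and "e \<in> E"
  obtains x1 x2 x3 x4 where "open_presentation V E lam e x1 x2 x3 x4"
    and "reach (open_edges E lam - Xe E e) x1 x3" and "reach (open_edges E lam - Xe E e) x2 x4"
proof -
  obtain \<gamma> x1 x2 x3 x4 where "cyc4 E e x1 x2 x3 x4" "lam {x1, x2} = 1"
    and r: "reach (cyc_edges E lam \<gamma> - {{x1, x2}, {x3, x4}}) x1 x3"
      "reach (cyc_edges E lam \<gamma> - {{x1, x2}, {x3, x4}}) x2 x4"
    using assms(1) unfolding typeA_def by blast
  with assms(2-6) have P: "open_presentation V E lam e x1 x2 x3 x4"
    by (intro open_presentation.intro)
  with r show ?thesis
    using that open_presentation.reach_cyc_edges_R by blast
qed

theorem lemma2p15:
  fixes V :: "'v set" and E :: "'v set set" and lam :: "'v labeling" and e :: "'v set"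
  assumes "simple_graph V E" and "connected_graph V E" and "bridgeless V E"
    and "triangle_free V E" and "cubic V E"
    and "valid_labeling E lam"
    and "e \<in> E"
  shows "((\<exists>\<gamma>1\<in>Gamma E lam. \<exists>\<gamma>2\<in>Gamma E lam. \<gamma>1 \<noteq> \<gamma>2 \<and>
             (\<exists>f\<in>Xe E e. lam f = 1 \<and> f \<subseteq> \<gamma>1) \<and> (\<exists>f\<in>Xe E e. lam f = 1 \<and> f \<subseteq> \<gamma>2))
           \<longrightarrow> typeB E (flip E e lam) e)
       \<and> (typeB E lam e \<longrightarrow>
           (\<exists>\<gamma>1\<in>Gamma E (flip E e lam). \<exists>\<gamma>2\<in>Gamma E (flip E e lam). \<gamma>1 \<noteq> \<gamma>2 \<and>
             (\<exists>f1\<in>Xe E e. \<exists>f2\<in>Xe E e. f1 \<noteq> f2 \<and>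
                flip E e lam f1 = 1 \<and> flip E e lam f2 = 1 \<and> f1 \<subseteq> \<gamma>1 \<and> f2 \<subseteq> \<gamma>2)))
       \<and> (typeA E lam e \<longrightarrow> typeA E (flip E e lam) e)"
proof -
  note G = assms(1,4,5,6,7)
  show ?thesis
  proof (intro conjI impI)
    assume two_cycles: "\<exists>\<gamma>1\<in>Gamma E lam. \<exists>\<gamma>2\<in>Gamma E lam. \<gamma>1 \<noteq> \<gamma>2 \<and>
        (\<exists>f\<in>Xe E e. lam f = 1 \<and> f \<subseteq> \<gamma>1) \<and> (\<exists>f\<in>Xe E e. lam f = 1 \<and> f \<subseteq> \<gamma>2)"
    obtain x1 x2 x3 x4 where "open_presentation V E lam e x1 x2 x3 x4"
      using open_presentation_exists[OF G] .
    then interpret open_presentation V E lam e x1 x2 x3 x4 .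
    have "\<not> reach (open_edges E lam) x1 x3"
      using two_cycles by (rule separated_if_two_cycles)
    then show "typeB E (flip E e lam) e"
      using flip_typeB R_pairs_if_separated by blast
  next
    assume "typeB E lam e"
    then obtain x1 x2 x3 x4 where "open_presentation V E lam e x1 x2 x3 x4"
      and "reach (open_edges E lam - Xe E e) x2 x3" and "reach (open_edges E lam - Xe E e) x4 x1"
      using G by (rule typeB_open_presentation)
    then show "\<exists>\<gamma>1\<in>Gamma E (flip E e lam). \<exists>\<gamma>2\<in>Gamma E (flip E e lam). \<gamma>1 \<noteq> \<gamma>2 \<and>
        (\<exists>f1\<in>Xe E e. \<exists>f2\<in>Xe E e. f1 \<noteq> f2 \<and>
           flip E e lam f1 = 1 \<and> flip E e lam f2 = 1 \<and> f1 \<subseteq> \<gamma>1 \<and> f2 \<subseteq> \<gamma>2)"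
      by (rule open_presentation.flip_separates)
  next
    assume "typeA E lam e"
    then obtain x1 x2 x3 x4 where "open_presentation V E lam e x1 x2 x3 x4"
      and "reach (open_edges E lam - Xe E e) x1 x3" and "reach (open_edges E lam - Xe E e) x2 x4"
      using G by (rule typeA_open_presentation)
    then show "typeA E (flip E e lam) e"
      by (rule open_presentation.flip_typeA)
  qed
qed

end
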